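(* Let $A\in\mathbb{R}^{m\times n}$ and $B\in\mathbb{R}^{p\times n}$ be such that the stacked matrix $Z=\begin{bmatrix}A\\ B\end{bmatrix}$ has full column rank, and let $Z=QR=\begin{bmatrix}Q_A\\ Q_B\end{bmatrix}R$ be its thin QR decomposition, with $Q\in\mathbb{R}^{(m+p)\times n}$ having orthonormal columns, $Q_A\in\mathbb{R}^{m\times n}$, $Q_B\in\mathbb{R}^{p\times n}$, and $R\in\mathbb{R}^{n\times n}$ upper triangular and nonsingular. Let $k\ge 1$ and suppose matrices $V_k\in\mathbb{R}^{n\times k}$, $U_{k+1}\in\mathbb{R}^{m\times(k+1)}$, $\widehat U_k\in\mathbb{R}^{p\times k}$, a unit vector $v_{k+1}\in\mathbb{R}^n$, scalars $\alpha_{k+1},\check\beta_k\in\mathbb{R}$, and matrices $J_k\in\mathbb{R}^{(k+1)\times k}$, $\check J_k\in\mathbb{R}^{k\times k}$ satisfy $$Q_AV_k=U_{k+1}J_k,\quad Q_A^TU_{k+1}=V_kJ_k^T+\alpha_{k+1}v_{k+1}e_{k+1}^T,$$ $$Q_BV_k=\widehat U_k\check J_k,\quad Q_B^T\widehat U_k=V_k\check J_k^T+\check\beta_kv_{k+1}e_k^T,$$ where $e_j$ denotes the $j$th canonical basis vector of the appropriate dimension. Suppose further that $J_k=X_{k+1}\begin{bmatrix}C_k\\ 0\end{bmatrix}Y_k^T$ and $\check J_k=\widehat X_kS_kY_k^T$, where $X_{k+1}\in\mathbb{R}^{(k+1)\times(k+1)}$, $\widehat X_k,Y_k\in\mathbb{R}^{k\times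 k}$ are orthogonal and $C_k=\mathrm{diag}(\tilde c_1,\dots,\tilde c_k)$, $S_k=\mathrm{diag}(\tilde s_1,\dots,\tilde s_k)$ are diagonal with $\tilde c_i^2+\tilde s_i^2=1$ for all $i$. For $i=1,\dots,k$ let $x_i$, $\hat x_i$, $y_i$ be the $i$th columns of $X_{k+1}$, $\widehat X_k$, $Y_k$, and define $\tilde u_i^A=U_{k+1}x_i$, $\tilde u_i^B=\widehat U_k\hat x_i$, $\tilde g_i=R^{-1}V_ky_i$. Then for each $i=1,\dots,k$, $$\sqrt{\big\|\tilde s_i^2A^T\tilde u_i^A-\tilde c_iB^TB\tilde g_i\big\|_2^2+\big\|\tilde c_i^2B^T\tilde u_i^B-\tilde s_iA^TA\tilde g_i\big\|_2^2}\;\le\;\sqrt{\big(\alpha_{k+1}e_{k+1}^Tx_i\big)^2+\big(\check\beta_ke_k^T\hat x_i\big)^2}\;\|R\|_2 .$$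
   Context: These relations arise from the lower-upper joint Lanczos bidiagonalization of $Q_A$ and $Q_B$ (with $J_k$ lower bidiagonal and $\check J_k$ upper bidiagonal) followed by a CS decomposition of the projected pair $\{J_k,\check J_k\}$; the quadruple $(\tilde c_i/\tilde s_i,\tilde u_i^A,\tilde u_i^B,\tilde g_i)$ is an approximate generalized singular quadruple of the pair $\{A,B\}$, and the left-hand side of the inequality is the residual norm $\|r^{\mathrm{GSVD}}\|_2$ used as a convergence criterion. *)

theory Defs
  imports Complex_Main "Jordan_Normal_Form.Matrix"
begin

definition vnorm2 :: "real vec \<Rightarrow> real" where
  "vnorm2 v = sqrt (v \<bullet> v)"

definition mnorm2 :: "real mat \<Rightarrow> real" where
  "mnorm2 M = Sup {vnorm2 (M *\<^sub>v x) | x. x \<in> carrier_vec (dim_col M) \<and> vnorm2 x = 1}"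

definition outer :: "real vec \<Rightarrow> real vec \<Rightarrow> real mat" where
  "outer v w = mat (dim_vec v) (dim_vec w) (\<lambda>(i,j). v $ i * w $ j)"

definition orth_square :: "nat \<Rightarrow> real mat \<Rightarrow> bool" where
  "orth_square n X \<longleftrightarrow> X \<in> carrier_mat n n \<and> transpose_mat X * X = 1\<^sub>m n"

end

theory Submission
  imports Defs "HOL-Analysis.L2_Norm"
begin

(* Fix i and let x, xh, y be the i-th columns of X, Xh, Y. The two factorizations give
   J y = c x, J^T x = c y, Jc y = s xh and Jc^T xh = s y. With g = R^-1 V y, A = QA R and
   B = QB R, the Lanczos relations become A g = c uA, B g = s uB and
     A^T uA = c z + P w,   B^T uB = s z + Q w,
   where z = R^T V y, w = R^T v, P = alpha e_(k+1)^T x and Q = beta e_k^T xh.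
   In both residuals the z-components cancel, leaving s t w and -c t w with t = s P - c Q, so the
   residual norm is |t| ||w|| since c^2 + s^2 = 1. Finally |t| <= sqrt (P^2 + Q^2) by
   Cauchy-Schwarz in the plane, and ||w|| = ||R^T v|| <= ||R||. *)

lemma scalar_prod_self_nonneg: "0 \<le> (u :: real vec) \<bullet> u"
  by (auto simp: scalar_prod_def intro!: sum_nonneg)

lemma vnorm2_nonneg: "0 \<le> vnorm2 u"
  by (simp add: vnorm2_def scalar_prod_self_nonneg)

lemma power2_vnorm2: "(vnorm2 u)\<^sup>2 = u \<bullet> u"
  by (simp add: vnorm2_def scalar_prod_self_nonneg)

lemma vnorm2_smult: "vnorm2 (a \<cdot>\<^sub>v u) = \<bar>a\<bar> * vnorm2 u"
proof -
  have "(a \<cdot>\<^sub>v u) \<bullet> (a \<cdot>\<^sub>v u) = a\<^sup>2 * (u \<bullet> u)"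
    by (simp add: scalar_prod_def sum_distrib_left power2_eq_square algebra_simps)
  then show ?thesis
    by (simp add: vnorm2_def real_sqrt_mult)
qed

lemma vnorm2_eq_0_iff:
  assumes "u \<in> carrier_vec n"
  shows "vnorm2 u = 0 \<longleftrightarrow> u = 0\<^sub>v n"
proof -
  have "vnorm2 u = 0 \<longleftrightarrow> (\<forall>i\<in>{0..<n}. (u $ i)\<^sup>2 = 0)"
    using assms by (simp add: vnorm2_def scalar_prod_def power2_eq_square [symmetric] sum_nonneg_eq_0_iff)
  also have "\<dots> \<longleftrightarrow> u = 0\<^sub>v n"
    using assms by (auto simp: vec_eq_iff)
  finally show ?thesis .
qed

lemma abs_scalar_prod_le_vnorm2:
  assumes "u \<in> carrier_vec n" "w \<in> carrier_vec n"
  shows "\<bar>u \<bullet> w\<bar> \<le> vnorm2 u * vnorm2 w"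
proof -
  have "\<bar>u \<bullet> w\<bar> \<le> (\<Sum>i<n. \<bar>u $ i\<bar> * \<bar>w $ i\<bar>)"
    using assms by (simp add: scalar_prod_def atLeast0LessThan abs_mult [symmetric] sum_abs)
  also have "\<dots> \<le> L2_set (\<lambda>i. u $ i) {..<n} * L2_set (\<lambda>i. w $ i) {..<n}"
    by (rule L2_set_mult_ineq)
  also have "\<dots> = vnorm2 u * vnorm2 w"
    using assms by (simp add: L2_set_def vnorm2_def scalar_prod_def atLeast0LessThan power2_eq_square)
  finally show ?thesis .
qed

lemma power2_vnorm2_mult_mat_vec_le:
  assumes M: "M \<in> carrier_mat nr nc" and x: "x \<in> carrier_vec nc"
  shows "(vnorm2 (M *\<^sub>v x))\<^sup>2 \<le> (\<Sum>i<nr. (vnorm2 (row M i))\<^sup>2) * (vnorm2 x)\<^sup>2"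
proof -
  have "(vnorm2 (M *\<^sub>v x))\<^sup>2 = (\<Sum>i<nr. (row M i \<bullet> x)\<^sup>2)"
    unfolding power2_vnorm2 using M by (simp add: scalar_prod_def [of "M *\<^sub>v x"] atLeast0LessThan power2_eq_square)
  also have "\<dots> \<le> (\<Sum>i<nr. (vnorm2 (row M i))\<^sup>2 * (vnorm2 x)\<^sup>2)"
  proof (rule sum_mono)
    fix i assume "i \<in> {..<nr}"
    have "\<bar>row M i \<bullet> x\<bar> \<le> vnorm2 (row M i) * vnorm2 x"
      using M x by (intro abs_scalar_prod_le_vnorm2) auto
    then show "(row M i \<bullet> x)\<^sup>2 \<le> (vnorm2 (row M i))\<^sup>2 * (vnorm2 x)\<^sup>2"
      by (metis abs_ge_zero power2_abs power_mono power_mult_distrib)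
  qed
  finally show ?thesis
    by (simp add: sum_distrib_right)
qed

lemma bdd_above_mnorm2_set:
  assumes "M \<in> carrier_mat nr nc"
  shows "bdd_above {vnorm2 (M *\<^sub>v x) | x. x \<in> carrier_vec (dim_col M) \<and> vnorm2 x = 1}"
proof (rule bdd_aboveI)
  fix r assume "r \<in> {vnorm2 (M *\<^sub>v x) | x. x \<in> carrier_vec (dim_col M) \<and> vnorm2 x = 1}"
  then obtain x where x: "x \<in> carrier_vec nc" "vnorm2 x = 1" and r: "r = vnorm2 (M *\<^sub>v x)"
    using assms by auto
  have "r\<^sup>2 \<le> (sqrt (\<Sum>i<nr. (vnorm2 (row M i))\<^sup>2))\<^sup>2"
    using power2_vnorm2_mult_mat_vec_le [OF assms x(1)] x(2) r by (simp add: sum_nonneg)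
  then show "r \<le> sqrt (\<Sum>i<nr. (vnorm2 (row M i))\<^sup>2)"
    by (rule power2_le_imp_le) (simp add: sum_nonneg)
qed

lemma vnorm2_mult_mat_vec_le_mnorm2:
  assumes "M \<in> carrier_mat nr nc" "x \<in> carrier_vec nc" "vnorm2 x = 1"
  shows "vnorm2 (M *\<^sub>v x) \<le> mnorm2 M"
  unfolding mnorm2_def using assms by (intro cSup_upper bdd_above_mnorm2_set) auto

(* For nc = 0 the set in the definition of mnorm2 is empty, and Sup {} is unspecified. *)
lemma mnorm2_nonneg:
  assumes "M \<in> carrier_mat nr nc" "0 < nc"
  shows "0 \<le> mnorm2 M"
proof -
  have "vnorm2 (unit_vec nc 0) = 1"
    using assms(2) by (simp add: vnorm2_def)
  then show ?thesis
    using vnorm2_mult_mat_vec_le_mnorm2 [OF assms(1) unit_vec_carrier] vnorm2_nonneg order_trans by blast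
qed

lemma vnorm2_mult_mat_vec_le:
  assumes M: "M \<in> carrier_mat nr nc" and x: "x \<in> carrier_vec nc"
  shows "vnorm2 (M *\<^sub>v x) \<le> mnorm2 M * vnorm2 x"
proof (cases "vnorm2 x = 0")
  case True
  then have "x = 0\<^sub>v nc" "M *\<^sub>v x = 0\<^sub>v nr"
    using M x by (auto simp: vnorm2_eq_0_iff)
  then show ?thesis
    using True vnorm2_eq_0_iff [of "0\<^sub>v nr" nr] by simp
next
  case False
  then have pos: "0 < vnorm2 x"
    using vnorm2_nonneg less_eq_real_def by auto
  have "vnorm2 (M *\<^sub>v x) / vnorm2 x = vnorm2 (M *\<^sub>v ((1 / vnorm2 x) \<cdot>\<^sub>v x))"
    using M x pos by (simp add: mult_mat_vec vnorm2_smult)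
  also have "\<dots> \<le> mnorm2 M"
    using M x pos by (intro vnorm2_mult_mat_vec_le_mnorm2) (auto simp: vnorm2_smult)
  finally show ?thesis
    using pos by (simp add: divide_le_eq)
qed

lemma vnorm2_transpose_mult_mat_vec_le:
  assumes M: "M \<in> carrier_mat nr nc" and "0 < nc" and v: "v \<in> carrier_vec nr"
  shows "vnorm2 (transpose_mat M *\<^sub>v v) \<le> mnorm2 M * vnorm2 v"
proof (cases "vnorm2 (transpose_mat M *\<^sub>v v) = 0")
  case True
  then show ?thesis
    using mnorm2_nonneg [OF M \<open>0 < nc\<close>] vnorm2_nonneg by simp
next
  case False
  define w where "w = transpose_mat M *\<^sub>v v"
  have w: "w \<in> carrier_vec nc"
    using M v by (simp add: w_def)
  have "(vnorm2 w)\<^sup>2 = v \<bullet> (M *\<^sub>v w)"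
    unfolding power2_vnorm2 using transpose_vec_mult_scalar [OF M w v] by (simp add: w_def)
  also have "\<dots> \<le> vnorm2 v * vnorm2 (M *\<^sub>v w)"
    using abs_scalar_prod_le_vnorm2 [of v nr "M *\<^sub>v w"] M v w by simp
  also have "\<dots> \<le> vnorm2 v * (mnorm2 M * vnorm2 w)"
    using M w by (intro mult_left_mono vnorm2_mult_mat_vec_le vnorm2_nonneg)
  finally have "vnorm2 w * vnorm2 w \<le> (mnorm2 M * vnorm2 v) * vnorm2 w"
    by (simp only: power2_eq_square mult_ac)
  moreover have "0 < vnorm2 w"
    using False vnorm2_nonneg less_eq_real_def by (auto simp: w_def)
  ultimately show ?thesis
    by (simp add: w_def)
qed

lemma index_append_rows:
  assumes "A \<in> carrier_mat nr1 nc" "B \<in> carrier_mat nr2 nc" "i < nr1 + nr2" "j < nc"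
  shows "(A @\<^sub>r B) $$ (i, j) = (if i < nr1 then A $$ (i, j) else B $$ (i - nr1, j))"
  using assms by (simp add: append_rows_def)

lemma row_append_rows:
  assumes "A \<in> carrier_mat nr1 nc" "B \<in> carrier_mat nr2 nc" "i < nr1 + nr2"
  shows "row (A @\<^sub>r B) i = (if i < nr1 then row A i else row B (i - nr1))"
proof -
  have "dim_row (A @\<^sub>r B) = nr1 + nr2" "dim_col (A @\<^sub>r B) = nc"
    using carrier_append_rows [OF assms(1,2)] by auto
  then show ?thesis
    using assms by (intro eq_vecI) (auto simp: index_append_rows)
qed

lemma append_rows_mult:
  assumes "A \<in> carrier_mat nr1 n" "B \<in> carrier_mat nr2 n" "C \<in> carrier_mat n nc"
  shows "(A @\<^sub>r B) * C = (A * C) @\<^sub>r (B * C)"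
proof -
  have AB: "A @\<^sub>r B \<in> carrier_mat (nr1 + nr2) n"
    using assms(1,2) by (rule carrier_append_rows)
  have ABC: "(A * C) @\<^sub>r (B * C) \<in> carrier_mat (nr1 + nr2) nc"
    using assms by (intro carrier_append_rows) auto
  show ?thesis
  proof (rule eq_matI)
    fix i j assume "i < dim_row ((A * C) @\<^sub>r (B * C))" "j < dim_col ((A * C) @\<^sub>r (B * C))"
    then have "i < nr1 + nr2" "j < nc"
      using ABC by auto
    then show "((A @\<^sub>r B) * C) $$ (i, j) = ((A * C) @\<^sub>r (B * C)) $$ (i, j)"
      using assms by (simp add: carrier_matD [OF AB] index_append_rows [of "A * C" nr1 nc "B * C" nr2]
          row_append_rows [OF assms(1,2)])
  qed (use AB ABC assms(3) in auto)
qed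

lemma append_rows_eq_iff:
  assumes "A \<in> carrier_mat nr1 nc" "A' \<in> carrier_mat nr1 nc"
    and "B \<in> carrier_mat nr2 nc" "B' \<in> carrier_mat nr2 nc"
  shows "A @\<^sub>r B = A' @\<^sub>r B' \<longleftrightarrow> A = A' \<and> B = B'"
proof
  assume eq: "A @\<^sub>r B = A' @\<^sub>r B'"
  have "A $$ (i, j) = A' $$ (i, j)" if "i < nr1" "j < nc" for i j
    using that assms index_append_rows [of A nr1 nc B nr2 i j] index_append_rows [of A' nr1 nc B' nr2 i j]
    unfolding eq by simp
  moreover have "B $$ (i, j) = B' $$ (i, j)" if "i < nr2" "j < nc" for i j
    using that assms index_append_rows [of A nr1 nc B nr2 "nr1 + i" j]
      index_append_rows [of A' nr1 nc B' nr2 "nr1 + i" j]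
    unfolding eq by simp
  ultimately show "A = A' \<and> B = B'"
    using assms by (auto intro!: eq_matI)
qed simp

lemma mult_unit_vec_eq_col:
  fixes A :: "'a :: semiring_1 mat"
  assumes "A \<in> carrier_mat nr nc" "i < nc"
  shows "A *\<^sub>v unit_vec nc i = col A i"
  using assms by (intro eq_vecI) auto

lemma orth_square_transpose_mult_col:
  assumes "orth_square n X" "i < n"
  shows "transpose_mat X *\<^sub>v col X i = unit_vec n i"
proof -
  have "X \<in> carrier_mat n n" "transpose_mat X * X = 1\<^sub>m n"
    using assms(1) by (auto simp: orth_square_def)
  then show ?thesis
    using col_mult2 [of "transpose_mat X" n n X n i] assms(2) by simp
qed

lemma col_diag_append_zero:
  fixes d :: "nat \<Rightarrow> 'a :: semiring_1"
  assumes "i < k"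
  shows "col (mat_diag k d @\<^sub>r 0\<^sub>m 1 k) i = d i \<cdot>\<^sub>v unit_vec (k + 1) i"
  using assms by (intro eq_vecI) (auto simp: append_rows_def mat_diag_def)

lemma row_diag_append_zero:
  fixes d :: "nat \<Rightarrow> 'a :: semiring_1"
  assumes "i < k"
  shows "row (mat_diag k d @\<^sub>r 0\<^sub>m 1 k) i = d i \<cdot>\<^sub>v unit_vec k i"
  using assms by (intro eq_vecI) (auto simp: append_rows_def mat_diag_def)

lemma col_mat_diag:
  fixes d :: "nat \<Rightarrow> 'a :: semiring_1"
  assumes "i < k"
  shows "col (mat_diag k d) i = d i \<cdot>\<^sub>v unit_vec k i"
  using assms by (intro eq_vecI) (auto simp: mat_diag_def)

lemma row_mat_diag:
  fixes d :: "nat \<Rightarrow> 'a :: semiring_1"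
  assumes "i < k"
  shows "row (mat_diag k d) i = d i \<cdot>\<^sub>v unit_vec k i"
  using assms by (intro eq_vecI) (auto simp: mat_diag_def)

lemma orth_factorization_mult_col:
  assumes X: "orth_square r X" and Y: "orth_square q Y" and D: "D \<in> carrier_mat r q"
    and i: "i < r" "i < q"
    and col_D: "col D i = d \<cdot>\<^sub>v unit_vec r i" and row_D: "row D i = d \<cdot>\<^sub>v unit_vec q i"
    and J: "J = X * D * transpose_mat Y"
  shows "J *\<^sub>v col Y i = d \<cdot>\<^sub>v col X i"
    and "transpose_mat J *\<^sub>v col X i = d \<cdot>\<^sub>v col Y i"
proof -
  have Xc: "X \<in> carrier_mat r r" and Yc: "Y \<in> carrier_mat q q"
    using X Y by (auto simp: orth_square_def)
  have "J *\<^sub>v col Y i = (X * D) *\<^sub>v (transpose_mat Y *\<^sub>v col Y i)"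
    unfolding J by (rule assoc_mult_mat_vec) (use Xc Yc D i in auto)
  also have "\<dots> = X *\<^sub>v (D *\<^sub>v (transpose_mat Y *\<^sub>v col Y i))"
    by (rule assoc_mult_mat_vec) (use Xc Yc D i in auto)
  also have "\<dots> = X *\<^sub>v col D i"
    using orth_square_transpose_mult_col [OF Y i(2)] mult_unit_vec_eq_col [OF D i(2)] by simp
  also have "\<dots> = d \<cdot>\<^sub>v col X i"
    using Xc i col_D by (simp add: mult_mat_vec mult_unit_vec_eq_col)
  finally show "J *\<^sub>v col Y i = d \<cdot>\<^sub>v col X i" .
  have "transpose_mat J = transpose_mat (transpose_mat Y) * transpose_mat (X * D)"
    unfolding J by (rule transpose_mult) (use Xc Yc D in auto)
  also have "\<dots> = Y * (transpose_mat D * transpose_mat X)"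
    using Xc D by (simp add: transpose_mult)
  finally have JT: "transpose_mat J = Y * (transpose_mat D * transpose_mat X)" .
  have "transpose_mat J *\<^sub>v col X i = Y *\<^sub>v ((transpose_mat D * transpose_mat X) *\<^sub>v col X i)"
    unfolding JT by (rule assoc_mult_mat_vec) (use Xc Yc D i in auto)
  also have "\<dots> = Y *\<^sub>v (transpose_mat D *\<^sub>v (transpose_mat X *\<^sub>v col X i))"
    using assoc_mult_mat_vec [of "transpose_mat D" q r "transpose_mat X" r "col X i"] Xc D i by simp
  also have "\<dots> = Y *\<^sub>v row D i"
    using orth_square_transpose_mult_col [OF X i(1)] mult_unit_vec_eq_col [of "transpose_mat D" q r i] D i
    by simp
  also have "\<dots> = d \<cdot>\<^sub>v col Y i"
    using Yc i row_D by (simp add: mult_mat_vec mult_unit_vec_eq_col)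
  finally show "transpose_mat J *\<^sub>v col X i = d \<cdot>\<^sub>v col Y i" .
qed

lemma smult_outer_mult_mat_vec:
  assumes "v \<in> carrier_vec n" "e \<in> carrier_vec r" "x \<in> carrier_vec r"
  shows "(a \<cdot>\<^sub>m outer v e) *\<^sub>v x = (a * (e \<bullet> x)) \<cdot>\<^sub>v v"
  using assms by (intro eq_vecI) (auto simp: outer_def scalar_prod_def sum_distrib_left algebra_simps)

lemma mult_mat_vec_by_lanczos:
  fixes A Q R :: "real mat"
  assumes Q: "Q \<in> carrier_mat nr n" and R: "R \<in> carrier_mat n n'" and g: "g \<in> carrier_vec n'"
    and V: "V \<in> carrier_mat n k" and U: "U \<in> carrier_mat nr r" and J: "J \<in> carrier_mat r k"
    and x: "x \<in> carrier_vec r" and y: "y \<in> carrier_vec k"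
    and A: "A = Q * R" and Rg: "R *\<^sub>v g = V *\<^sub>v y" and QV: "Q * V = U * J"
    and Jy: "J *\<^sub>v y = c \<cdot>\<^sub>v x"
  shows "A *\<^sub>v g = c \<cdot>\<^sub>v (U *\<^sub>v x)"
proof -
  have "A *\<^sub>v g = Q *\<^sub>v (V *\<^sub>v y)"
    using Q R g Rg unfolding A by simp
  also have "\<dots> = (U * J) *\<^sub>v y"
    using Q V y unfolding QV [symmetric] by simp
  also have "\<dots> = c \<cdot>\<^sub>v (U *\<^sub>v x)"
    using U J x y Jy by (simp add: mult_mat_vec)
  finally show ?thesis .
qed

lemma transpose_mult_mat_vec_by_lanczos:
  fixes A Q R :: "real mat"
  assumes Q: "Q \<in> carrier_mat nr n" and R: "R \<in> carrier_mat n n'"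
    and V: "V \<in> carrier_mat n k" and U: "U \<in> carrier_mat nr r" and J: "J \<in> carrier_mat r k"
    and v: "v \<in> carrier_vec n" and e: "e \<in> carrier_vec r"
    and x: "x \<in> carrier_vec r" and y: "y \<in> carrier_vec k"
    and A: "A = Q * R"
    and rel: "transpose_mat Q * U = V * transpose_mat J + a \<cdot>\<^sub>m outer v e"
    and Jx: "transpose_mat J *\<^sub>v x = c \<cdot>\<^sub>v y"
  shows "transpose_mat A *\<^sub>v (U *\<^sub>v x)
    = c \<cdot>\<^sub>v (transpose_mat R *\<^sub>v (V *\<^sub>v y)) + (a * (e \<bullet> x)) \<cdot>\<^sub>v (transpose_mat R *\<^sub>v v)"
proof -
  have outer: "a \<cdot>\<^sub>m outer v e \<in> carrier_mat n r"
    using v e by (simp add: outer_def)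
  have "transpose_mat A *\<^sub>v (U *\<^sub>v x) = transpose_mat R *\<^sub>v ((transpose_mat Q * U) *\<^sub>v x)"
    using Q R U x by (simp add: A transpose_mult)
  also have "(transpose_mat Q * U) *\<^sub>v x = c \<cdot>\<^sub>v (V *\<^sub>v y) + (a * (e \<bullet> x)) \<cdot>\<^sub>v v"
    unfolding rel using V J x y outer Jx
    by (simp add: add_mult_distrib_mat_vec [of _ n r] smult_outer_mult_mat_vec [OF v e x] mult_mat_vec)
  finally show ?thesis
    using R V v y by (simp add: mult_add_distrib_mat_vec [of _ n' n] mult_mat_vec)
qed

lemma abs_rotation_le:
  fixes c s P Q :: real
  assumes "c\<^sup>2 + s\<^sup>2 = 1"
  shows "\<bar>s * P - c * Q\<bar> \<le> sqrt (P\<^sup>2 + Q\<^sup>2)"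
proof (rule real_le_rsqrt)
  have "(s * P - c * Q)\<^sup>2 + (s * Q + c * P)\<^sup>2 = (c\<^sup>2 + s\<^sup>2) * (P\<^sup>2 + Q\<^sup>2)"
    by (simp add: power2_eq_square algebra_simps)
  also have "\<dots> = P\<^sup>2 + Q\<^sup>2"
    using assms by simp
  finally show "\<bar>s * P - c * Q\<bar>\<^sup>2 \<le> P\<^sup>2 + Q\<^sup>2"
    unfolding power2_abs using zero_le_power2 [of "s * Q + c * P"] by linarith
qed

lemma gsvd_residual_eq:
  fixes A B :: "real mat"
  assumes A: "A \<in> carrier_mat m n" and B: "B \<in> carrier_mat p n"
    and uA: "uA \<in> carrier_vec m" and uB: "uB \<in> carrier_vec p" and g: "g \<in> carrier_vec n"
    and z: "z \<in> carrier_vec n" and w: "w \<in> carrier_vec n"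
    and cs: "c\<^sup>2 + s\<^sup>2 = 1"
    and Ag: "A *\<^sub>v g = c \<cdot>\<^sub>v uA" and Bg: "B *\<^sub>v g = s \<cdot>\<^sub>v uB"
    and AuA: "transpose_mat A *\<^sub>v uA = c \<cdot>\<^sub>v z + P \<cdot>\<^sub>v w"
    and BuB: "transpose_mat B *\<^sub>v uB = s \<cdot>\<^sub>v z + Q \<cdot>\<^sub>v w"
  shows "sqrt ((vnorm2 (s\<^sup>2 \<cdot>\<^sub>v (transpose_mat A *\<^sub>v uA) - c \<cdot>\<^sub>v ((transpose_mat B * B) *\<^sub>v g)))\<^sup>2
            + (vnorm2 (c\<^sup>2 \<cdot>\<^sub>v (transpose_mat B *\<^sub>v uB) - s \<cdot>\<^sub>v ((transpose_mat A * A) *\<^sub>v g)))\<^sup>2)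
         = \<bar>s * P - c * Q\<bar> * vnorm2 w"
proof -
  have AAg: "(transpose_mat A * A) *\<^sub>v g = c \<cdot>\<^sub>v (c \<cdot>\<^sub>v z + P \<cdot>\<^sub>v w)"
    using assoc_mult_mat_vec [of "transpose_mat A" n m A n g] A g uA
    by (simp add: Ag AuA mult_mat_vec [of _ n m])
  have BBg: "(transpose_mat B * B) *\<^sub>v g = s \<cdot>\<^sub>v (s \<cdot>\<^sub>v z + Q \<cdot>\<^sub>v w)"
    using assoc_mult_mat_vec [of "transpose_mat B" n p B n g] B g uB
    by (simp add: Bg BuB mult_mat_vec [of _ n p])
  have res_A: "s\<^sup>2 \<cdot>\<^sub>v (transpose_mat A *\<^sub>v uA) - c \<cdot>\<^sub>v ((transpose_mat B * B) *\<^sub>v g)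
      = (s * (s * P - c * Q)) \<cdot>\<^sub>v w"
    unfolding AuA BBg using z w by (intro eq_vecI) (simp_all add: power2_eq_square algebra_simps)
  have res_B: "c\<^sup>2 \<cdot>\<^sub>v (transpose_mat B *\<^sub>v uB) - s \<cdot>\<^sub>v ((transpose_mat A * A) *\<^sub>v g)
      = (- c * (s * P - c * Q)) \<cdot>\<^sub>v w"
    unfolding BuB AAg using z w by (intro eq_vecI) (simp_all add: power2_eq_square algebra_simps)
  have "(\<bar>s * (s * P - c * Q)\<bar> * vnorm2 w)\<^sup>2 + (\<bar>- c * (s * P - c * Q)\<bar> * vnorm2 w)\<^sup>2
      = (c\<^sup>2 + s\<^sup>2) * (\<bar>s * P - c * Q\<bar> * vnorm2 w)\<^sup>2"
    unfolding power_mult_distrib power2_abs by (simp add: algebra_simps)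
  then show ?thesis
    unfolding res_A res_B vnorm2_smult cs using vnorm2_nonneg [of w] by simp
qed

lemma lanczos_gsvd_residual_le:
  fixes A B QA QB R Rinv V U Uh J Jc X Xh Y :: "real mat" and v :: "real vec"
    and c s :: "nat \<Rightarrow> real"
  assumes A: "A \<in> carrier_mat m n" and B: "B \<in> carrier_mat p n"
    and QA: "QA \<in> carrier_mat m n" and QB: "QB \<in> carrier_mat p n"
    and R: "R \<in> carrier_mat n n" and Rinv: "Rinv \<in> carrier_mat n n" "R * Rinv = 1\<^sub>m n"
    and AR: "A = QA * R" and BR: "B = QB * R"
    and V: "V \<in> carrier_mat n k" and U: "U \<in> carrier_mat m (k + 1)" and Uh: "Uh \<in> carrier_mat p k"
    and v: "v \<in> carrier_vec n" "vnorm2 v = 1"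
    and J: "J \<in> carrier_mat (k + 1) k" and Jc: "Jc \<in> carrier_mat k k"
    and rel1: "QA * V = U * J"
    and rel2: "transpose_mat QA * U = V * transpose_mat J + alpha \<cdot>\<^sub>m outer v (unit_vec (k + 1) k)"
    and rel3: "QB * V = Uh * Jc"
    and rel4: "transpose_mat QB * Uh = V * transpose_mat Jc + beta \<cdot>\<^sub>m outer v (unit_vec k (k - 1))"
    and X: "orth_square (k + 1) X" and Xh: "orth_square k Xh" and Y: "orth_square k Y"
    and Jdec: "J = X * (mat_diag k c @\<^sub>r 0\<^sub>m 1 k) * transpose_mat Y"
    and Jcdec: "Jc = Xh * mat_diag k s * transpose_mat Y"
    and i: "i < k" and cs: "(c i)\<^sup>2 + (s i)\<^sup>2 = 1"
  shows "sqrt ((vnorm2 ((s i)\<^sup>2 \<cdot>\<^sub>v (transpose_mat A *\<^sub>v (U *\<^sub>v col X i))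
                   - c i \<cdot>\<^sub>v ((transpose_mat B * B) *\<^sub>v (Rinv *\<^sub>v (V *\<^sub>v col Y i)))))\<^sup>2
            + (vnorm2 ((c i)\<^sup>2 \<cdot>\<^sub>v (transpose_mat B *\<^sub>v (Uh *\<^sub>v col Xh i))
                   - s i \<cdot>\<^sub>v ((transpose_mat A * A) *\<^sub>v (Rinv *\<^sub>v (V *\<^sub>v col Y i)))))\<^sup>2)
         \<le> sqrt ((alpha * (unit_vec (k + 1) k \<bullet> col X i))\<^sup>2 + (beta * (unit_vec k (k - 1) \<bullet> col Xh i))\<^sup>2)
            * mnorm2 R"
proof -
  define x xh y where "x = col X i" and "xh = col Xh i" and "y = col Y i"
  define g where "g = Rinv *\<^sub>v (V *\<^sub>v y)"
  define P Q where "P = alpha * (unit_vec (k + 1) k \<bullet> x)" and "Q = beta * (unit_vec k (k - 1) \<bullet> xh)"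
  define z w where "z = transpose_mat R *\<^sub>v (V *\<^sub>v y)" and "w = transpose_mat R *\<^sub>v v"
  have x: "x \<in> carrier_vec (k + 1)"
    using X i unfolding x_def orth_square_def by (intro col_carrier_vec [of _ "k + 1"]) auto
  have xh: "xh \<in> carrier_vec k" and y: "y \<in> carrier_vec k"
    using Xh Y i unfolding xh_def y_def orth_square_def by auto
  have g: "g \<in> carrier_vec n"
    using Rinv(1) V y by (simp add: g_def)
  have Jy: "J *\<^sub>v y = c i \<cdot>\<^sub>v x" and JTx: "transpose_mat J *\<^sub>v x = c i \<cdot>\<^sub>v y"
    using orth_factorization_mult_col [OF X Y carrier_append_rows [OF mat_diag_dim zero_carrier_mat] _ i
        col_diag_append_zero [OF i] row_diag_append_zero [OF i] Jdec] i
    by (auto simp: x_def y_def)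
  have Jcy: "Jc *\<^sub>v y = s i \<cdot>\<^sub>v xh" and JcTxh: "transpose_mat Jc *\<^sub>v xh = s i \<cdot>\<^sub>v y"
    using orth_factorization_mult_col [OF Xh Y mat_diag_dim i i col_mat_diag [OF i] row_mat_diag [OF i] Jcdec]
    by (auto simp: xh_def y_def)
  have Rg: "R *\<^sub>v g = V *\<^sub>v y"
    using assoc_mult_mat_vec [OF R Rinv(1), of "V *\<^sub>v y"] Rinv(2) V y by (simp add: g_def)
  have "0 < n"
    using v by (cases n) (simp_all add: vnorm2_def scalar_prod_def)
  have "sqrt ((vnorm2 ((s i)\<^sup>2 \<cdot>\<^sub>v (transpose_mat A *\<^sub>v (U *\<^sub>v x)) - c i \<cdot>\<^sub>v ((transpose_mat B * B) *\<^sub>v g)))\<^sup>2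
          + (vnorm2 ((c i)\<^sup>2 \<cdot>\<^sub>v (transpose_mat B *\<^sub>v (Uh *\<^sub>v xh)) - s i \<cdot>\<^sub>v ((transpose_mat A * A) *\<^sub>v g)))\<^sup>2)
      = \<bar>s i * P - c i * Q\<bar> * vnorm2 w"
  proof (rule gsvd_residual_eq [OF A B _ _ g])
    show "A *\<^sub>v g = c i \<cdot>\<^sub>v (U *\<^sub>v x)"
      using mult_mat_vec_by_lanczos [OF QA R g V U J x y AR Rg rel1 Jy] .
    show "B *\<^sub>v g = s i \<cdot>\<^sub>v (Uh *\<^sub>v xh)"
      using mult_mat_vec_by_lanczos [OF QB R g V Uh Jc xh y BR Rg rel3 Jcy] .
    show "transpose_mat A *\<^sub>v (U *\<^sub>v x) = c i \<cdot>\<^sub>v z + P \<cdot>\<^sub>v w"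
      using transpose_mult_mat_vec_by_lanczos [OF QA R V U J v(1) _ x y AR rel2 JTx]
      by (simp add: z_def w_def P_def)
    show "transpose_mat B *\<^sub>v (Uh *\<^sub>v xh) = s i \<cdot>\<^sub>v z + Q \<cdot>\<^sub>v w"
      using transpose_mult_mat_vec_by_lanczos [OF QB R V Uh Jc v(1) _ xh y BR rel4 JcTxh]
      by (simp add: z_def w_def Q_def)
  qed (use cs U Uh x xh R V y v in \<open>auto simp: z_def w_def\<close>)
  also have "\<dots> \<le> sqrt (P\<^sup>2 + Q\<^sup>2) * mnorm2 R"
    using abs_rotation_le [OF cs, of P Q]
      vnorm2_transpose_mult_mat_vec_le [OF R \<open>0 < n\<close> v(1)] v(2) vnorm2_nonneg [of w]
    by (intro mult_mono) (auto simp: w_def)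
  finally show ?thesis
    by (simp add: x_def xh_def y_def g_def P_def Q_def)
qed

theorem mainTheorem1:
  fixes m n p k :: nat
    and A QA :: "real mat" and B QB :: "real mat" and R Rinv :: "real mat"
    and V U Uh J Jc X Xh Y :: "real mat"
    and v :: "real vec" and alpha beta :: real
    and c s :: "nat \<Rightarrow> real"
  assumes A: "A \<in> carrier_mat m n" and B: "B \<in> carrier_mat p n"
    and full_rank: "\<forall>x \<in> carrier_vec n. (A @\<^sub>r B) *\<^sub>v x = 0\<^sub>v (m + p) \<longrightarrow> x = 0\<^sub>v n"
    and QA: "QA \<in> carrier_mat m n" and QB: "QB \<in> carrier_mat p n"
    and R: "R \<in> carrier_mat n n" and R_ut: "upper_triangular R"
    and Rinv: "Rinv \<in> carrier_mat n n" "R * Rinv = 1\<^sub>m n" "Rinv * R = 1\<^sub>m n"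
    and QR: "A @\<^sub>r B = (QA @\<^sub>r QB) * R"
    and Q_orth: "transpose_mat (QA @\<^sub>r QB) * (QA @\<^sub>r QB) = 1\<^sub>m n"
    and k: "k \<ge> 1"
    and V: "V \<in> carrier_mat n k" and U: "U \<in> carrier_mat m (k+1)"
    and Uh: "Uh \<in> carrier_mat p k"
    and v: "v \<in> carrier_vec n" "vnorm2 v = 1"
    and J: "J \<in> carrier_mat (k+1) k" and Jc: "Jc \<in> carrier_mat k k"
    and rel1: "QA * V = U * J"
    and rel2: "transpose_mat QA * U = V * transpose_mat J + alpha \<cdot>\<^sub>m outer v (unit_vec (k+1) k)"
    and rel3: "QB * V = Uh * Jc"
    and rel4: "transpose_mat QB * Uh = V * transpose_mat Jc + beta \<cdot>\<^sub>m outer v (unit_vec k (k-1))"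
    and X: "orth_square (k+1) X" and Xh: "orth_square k Xh" and Y: "orth_square k Y"
    and cs: "\<forall>i<k. (c i)\<^sup>2 + (s i)\<^sup>2 = 1"
    and Jdec: "J = X * (mat_diag k c @\<^sub>r 0\<^sub>m 1 k) * transpose_mat Y"
    and Jcdec: "Jc = Xh * mat_diag k s * transpose_mat Y"
  shows "\<forall>i<k.
    (let uA = U *\<^sub>v col X i; uB = Uh *\<^sub>v col Xh i; g = Rinv *\<^sub>v (V *\<^sub>v col Y i) in
      sqrt ((vnorm2 ((s i)\<^sup>2 \<cdot>\<^sub>v (transpose_mat A *\<^sub>v uA) - c i \<cdot>\<^sub>v ((transpose_mat B * B) *\<^sub>v g)))\<^sup>2
          + (vnorm2 ((c i)\<^sup>2 \<cdot>\<^sub>v (transpose_mat B *\<^sub>v uB) - s i \<cdot>\<^sub>v ((transpose_mat A * A) *\<^sub>v g)))\<^sup>2)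
      \<le> sqrt ((alpha * (unit_vec (k+1) k \<bullet> col X i))\<^sup>2 + (beta * (unit_vec k (k-1) \<bullet> col Xh i))\<^sup>2)
         * mnorm2 R)"
proof -
  have "A = QA * R" and "B = QB * R"
    using QR A B QA QB R by (simp_all add: append_rows_mult append_rows_eq_iff [of _ m n _ _ p])
  then show ?thesis
    using lanczos_gsvd_residual_le [OF A B QA QB R Rinv(1,2) _ _ V U Uh v J Jc rel1 rel2 rel3 rel4 X Xh Y
        Jdec Jcdec] cs
    by (simp add: Let_def)
qed

end
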